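(* Let $\lambda>0$, $v_2<v_1$ with either $v_2<0<v_1$ or $0<v_2<v_1$, $t\ge0$ and $j\in\{1,2\}$. With $\Delta_j^\lambda(\xi,t)$ the mean-square distance (defined in the context) between the reset process with reset rate $\xi>0$ and the process without resets, one has $$\lim_{\xi\to+\infty}\Delta_j^\lambda(\xi,t)=E_j[X^2(t)]=\frac{t^2[3v_j^2+\lambda t(v_1^2+v_1v_2+v_2^2)]}{3(1+\lambda t)}.$$
   Context: GCP with intensity $\lambda>0$: a Poisson process whose rate is random, exponentially distributed with mean $\lambda$; increments satisfy $P\{\tilde N_\lambda(t+s)-\tilde N_\lambda(t)=k\}=\frac{1}{1+\lambda s}(\frac{\lambda s}{1+\lambda s})^k$. Process without resets $X(t)$: a particle starts at the origin with velocity $v_j$ ($v_1,v_2\neq0$, $v_2<v_1$), moves with velocity alternating between $v_1$ and $v_2$, the periods at velocity $v_1$ and at $v_2$ governed by two independent GCPs of intensity $\lambda$; its law given $V(0)=v_j$ has generalized density $p(x,t|v_j)=\frac{\delta(x-v_jt)}{1+\lambda t}+\mathbb 1_{\{v_2t<x<v_1t\}}\frac{\lambda}{(v_1-v_2)(1+\lambda t)}$ ($\delta$ Dirac delta), with $E_j[X(t)]=\frac{t[2v_j+\lambda t(v_1+v_2)]}{2(1+\lambda t)}$ and $E_j[X^2(t)]$ as in the claim. Reset process $\tilde X(t)$ (reset rate $\xi>0$): same dynamics but instantaneously reset to the origin at the epochs of an independent Poisson process of rate $\xi$, restarting afresh with velocity $v_j$; its density is $\tilde p(x,t|v_j)=e^{-\xi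 t}p(x,t|v_j)+\xi\int_0^te^{-\xi s}p(x,s|v_j)ds$. $E_j$ denotes expectation conditional on start at the origin with velocity $v_j$. Mean-square distance: $\Delta_j^\lambda(\xi,t):=E_j[\tilde X^2(t)]+E_j[X^2(t)]-2E_j[\tilde X(t)]E_j[X(t)]$. *)

theory Defs
  imports "HOL-Analysis.Analysis"
begin

text \<open>Expectation of f(X(t)) for the process without resets, started at the origin
with velocity vj, computed against the generalized density
p(x,t|vj) = delta(x - vj t)/(1+lam t) + 1{v2 t < x < v1 t} lam/((v1-v2)(1+lam t)).\<close>
definition gcp_expect :: "real \<Rightarrow> real \<Rightarrow> real \<Rightarrow> real \<Rightarrow> (real \<Rightarrow> real) \<Rightarrow> real \<Rightarrow> real" where
  "gcp_expect lam v1 v2 vj f t =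
     f (vj * t) / (1 + lam * t)
     + integral {v2 * t .. v1 * t} (\<lambda>x. f x * lam / ((v1 - v2) * (1 + lam * t)))"

definition reset_expect :: "real \<Rightarrow> real \<Rightarrow> real \<Rightarrow> real \<Rightarrow> real \<Rightarrow> (real \<Rightarrow> real) \<Rightarrow> real \<Rightarrow> real" where
  "reset_expect lam xi v1 v2 vj f t =
     exp (- xi * t) * gcp_expect lam v1 v2 vj f t
     + xi * integral {0 .. t} (\<lambda>s. exp (- xi * s) * gcp_expect lam v1 v2 vj f s)"

definition msd :: "real \<Rightarrow> real \<Rightarrow> real \<Rightarrow> real \<Rightarrow> real \<Rightarrow> real \<Rightarrow> real" where
  "msd lam xi v1 v2 vj t =
     reset_expect lam xi v1 v2 vj (\<lambda>x. x ^ 2) t + gcp_expect lam v1 v2 vj (\<lambda>x. x ^ 2) t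
     - 2 * reset_expect lam xi v1 v2 vj (\<lambda>x. x) t * gcp_expect lam v1 v2 vj (\<lambda>x. x) t"

end

theory Submission imports Defs "HOL-Real_Asymp.Real_Asymp" begin

(* The reset density is e^{-xi t} p(x,t) plus the average xi * int_0^t e^{-xi s} p(x,s) ds,
   whose weight concentrates at s = 0 as xi -> infinity.  Every moment of order k >= 1 of the
   process without resets is s times a function continuous in s, hence vanishes linearly at
   s = 0, so all such moments of the reset process tend to 0.  Therefore
   Delta = E[tilde X^2] + E[X^2] - 2 E[tilde X] E[X] tends to E[X^2], which is obtained by
   integrating x^2 against the explicit density. *)

lemma has_integral_power_mult:
  fixes a b c :: real
  assumes "a \<le> b"
  shows "((\<lambda>x. x ^ k * c) has_integral (b ^ Suc k - a ^ Suc k) / Suc k * c) {a..b}"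
proof -
  have "((\<lambda>x. x ^ k) has_integral (b ^ Suc k / Suc k - a ^ Suc k / Suc k)) {a..b}"
  proof (rule fundamental_theorem_of_calculus[OF assms])
    fix x
    have "((\<lambda>x. x ^ Suc k / Suc k) has_real_derivative x ^ k) (at x)"
      by (intro derivative_eq_intros) auto
    then show "((\<lambda>x. x ^ Suc k / Suc k) has_vector_derivative x ^ k) (at x within {a..b})"
      by (simp add: has_real_derivative_iff_has_vector_derivative has_vector_derivative_at_within)
  qed
  then show ?thesis
    by (intro has_integral_mult_left) (simp add: diff_divide_distrib)
qed

lemma gcp_expect_power:
  fixes lam v1 v2 vj s :: real
  assumes "v2 \<le> v1" and "s \<ge> 0"
  shows "gcp_expect lam v1 v2 vj (\<lambda>x. x ^ k) s
    = s ^ k * vj ^ k / (1 + lam * s)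
      + lam * s ^ Suc k * (v1 ^ Suc k - v2 ^ Suc k) / (Suc k * (v1 - v2) * (1 + lam * s))"
proof -
  have "v2 * s \<le> v1 * s"
    using assms by (simp add: mult_right_mono)
  from has_integral_power_mult[OF this, of k "lam / ((v1 - v2) * (1 + lam * s))"]
  have "integral {v2 * s .. v1 * s} (\<lambda>x. x ^ k * lam / ((v1 - v2) * (1 + lam * s)))
      = ((v1 * s) ^ Suc k - (v2 * s) ^ Suc k) / Suc k * (lam / ((v1 - v2) * (1 + lam * s)))"
    by (intro integral_unique) simp
  also have "\<dots> = ((v1 * s) ^ Suc k - (v2 * s) ^ Suc k) * lam / (Suc k * ((v1 - v2) * (1 + lam * s)))"
    by (rule times_divide_times_eq)
  also have "\<dots> = lam * s ^ Suc k * (v1 ^ Suc k - v2 ^ Suc k) / (Suc k * (v1 - v2) * (1 + lam * s))"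
    by (simp add: power_mult_distrib algebra_simps del: of_nat_Suc)
  finally show ?thesis
    by (simp add: gcp_expect_def power_mult_distrib mult.commute)
qed

lemma gcp_expect_square:
  fixes lam v1 v2 vj s :: real
  assumes "lam \<ge> 0" and "v2 < v1" and "s \<ge> 0"
  shows "gcp_expect lam v1 v2 vj (\<lambda>x. x ^ 2) s
    = s ^ 2 * (3 * vj ^ 2 + lam * s * (v1 ^ 2 + v1 * v2 + v2 ^ 2)) / (3 * (1 + lam * s))"
proof -
  define d where "d = v1 - v2"
  define D where "D = 1 + lam * s"
  have "d \<noteq> 0" and "D \<noteq> 0"
    using assms by (auto simp: d_def D_def add_pos_nonneg intro!: less_imp_neq[symmetric])
  have "v1 ^ 3 - v2 ^ 3 = d * (v1 ^ 2 + v1 * v2 + v2 ^ 2)"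
    by (simp add: d_def algebra_simps power2_eq_square power3_eq_cube)
  then have "gcp_expect lam v1 v2 vj (\<lambda>x. x ^ 2) s
      = s ^ 2 * vj ^ 2 / D + lam * s ^ 3 * (d * (v1 ^ 2 + v1 * v2 + v2 ^ 2)) / (3 * d * D)"
    using gcp_expect_power[of v2 v1 s lam vj 2] assms by (simp add: d_def D_def numeral_3_eq_3)
  also have "\<dots> = s ^ 2 * (3 * vj ^ 2 + lam * s * (v1 ^ 2 + v1 * v2 + v2 ^ 2)) / (3 * D)"
    using \<open>d \<noteq> 0\<close> \<open>D \<noteq> 0\<close> by (simp add: field_simps power2_eq_square power3_eq_cube)
  finally show ?thesis
    by (simp add: D_def)
qed

lemma gcp_expect_power_factor:
  fixes lam v1 v2 vj :: real
  assumes "lam \<ge> 0" and "v2 \<le> v1" and "k \<ge> 1"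
  obtains h where "continuous_on {0..t} h"
    and "\<And>s. s \<in> {0..t} \<Longrightarrow> gcp_expect lam v1 v2 vj (\<lambda>x. x ^ k) s = s * h s"
proof
  define m where "m = k - 1"
  have k: "k = Suc m"
    using assms(3) by (simp add: m_def)
  define c where "c = lam * (v1 ^ Suc k - v2 ^ Suc k) / (Suc k * (v1 - v2))"
  let ?h = "\<lambda>s. (s ^ m * vj ^ k + c * s ^ k) / (1 + lam * s)"
  have pos: "1 + lam * s \<noteq> 0" if "s \<in> {0..t}" for s
    using assms that by (auto simp: add_pos_nonneg intro!: less_imp_neq[symmetric])
  then show "continuous_on {0..t} ?h"
    by (auto intro!: continuous_intros)
  show "gcp_expect lam v1 v2 vj (\<lambda>x. x ^ k) s = s * ?h s" if "s \<in> {0..t}" for s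
    using gcp_expect_power[of v2 v1 s lam vj k] assms that
    by (simp add: k c_def add_divide_distrib algebra_simps del: of_nat_Suc)
qed

lemma integral_linear_exp_le:
  fixes xi t :: real
  assumes "xi > 0" and "t \<ge> 0"
  shows "integral {0..t} (\<lambda>s. s * exp (- xi * s)) \<le> 1 / xi ^ 2"
proof -
  let ?F = "\<lambda>s. - (s / xi + 1 / xi ^ 2) * exp (- xi * s)"
  have "((\<lambda>s. s * exp (- xi * s)) has_integral ?F t - ?F 0) {0..t}"
  proof (rule fundamental_theorem_of_calculus[OF assms(2)])
    fix s
    have "(?F has_real_derivative s * exp (- xi * s)) (at s)"
      using assms by (auto intro!: derivative_eq_intros simp: field_simps power2_eq_square)
    then show "(?F has_vector_derivative s * exp (- xi * s)) (at s within {0..t})"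
      by (simp add: has_real_derivative_iff_has_vector_derivative has_vector_derivative_at_within)
  qed
  moreover have "0 \<le> t / xi + 1 / xi ^ 2"
    using assms by simp
  then have "?F t \<le> 0"
    by (intro mult_nonpos_nonneg) simp_all
  ultimately show ?thesis
    by (simp add: integral_unique)
qed

lemma reset_transform_tendsto_zero:
  fixes g h :: "real \<Rightarrow> real" and t :: real
  assumes t: "t \<ge> 0" and h: "continuous_on {0..t} h"
    and g: "\<And>s. s \<in> {0..t} \<Longrightarrow> g s = s * h s"
  shows "((\<lambda>xi. exp (- xi * t) * g t + xi * integral {0..t} (\<lambda>s. exp (- xi * s) * g s))
           \<longlongrightarrow> 0) at_top"
proof -
  obtain C where "C > 0" and C: "\<And>s. s \<in> {0..t} \<Longrightarrow> \<bar>h s\<bar> \<le> C"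
    using compact_imp_bounded[OF compact_continuous_image[OF h compact_Icc]]
    by (auto simp: bounded_pos)
  have g_le: "\<bar>g s\<bar> \<le> C * s" if "s \<in> {0..t}" for s
    using mult_right_mono[OF C[OF that], of s] that by (simp add: g abs_mult mult.commute)
  have g_cont: "continuous_on {0..t} g"
    by (rule continuous_on_eq[of _ "\<lambda>s. s * h s"]) (auto intro: continuous_intros h simp: g)
  have no_reset: "((\<lambda>xi. exp (- xi * t) * g t) \<longlongrightarrow> 0) at_top"
  proof (cases "t = 0")
    case True
    then show ?thesis by (simp add: g)
  next
    case False
    with t have "((\<lambda>xi. exp (- xi * t)) \<longlongrightarrow> 0) at_top"
      by real_asymp
    then show ?thesis by (rule tendsto_mult_left_zero)
  qed
  have after_reset: "((\<lambda>xi. xi * integral {0..t} (\<lambda>s. exp (- xi * s) * g s)) \<longlongrightarrow> 0) at_top"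
  proof (rule Lim_null_comparison)
    show "((\<lambda>xi. C / xi) \<longlongrightarrow> 0) at_top"
      by real_asymp
    show "\<forall>\<^sub>F xi in at_top. norm (xi * integral {0..t} (\<lambda>s. exp (- xi * s) * g s)) \<le> C / xi"
      using eventually_gt_at_top[of 0]
    proof eventually_elim
      case (elim xi)
      have "norm (exp (- xi * s) * g s) \<le> C * (s * exp (- xi * s))" if "s \<in> {0..t}" for s
        using mult_left_mono[OF g_le[OF that], of "exp (- xi * s)"] by (simp add: abs_mult mult_ac)
      then have "norm (integral {0..t} (\<lambda>s. exp (- xi * s) * g s))
          \<le> integral {0..t} (\<lambda>s. C * (s * exp (- xi * s)))"
        using g_cont
        by (intro integral_norm_bound_integral integrable_continuous_interval continuous_intros)
      also have "\<dots> \<le> C / xi ^ 2"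
        using mult_left_mono[OF integral_linear_exp_le[OF elim t], of C] \<open>C > 0\<close> by simp
      finally show ?case
        using elim by (simp add: abs_mult power2_eq_square field_simps)
    qed
  qed
  show ?thesis
    using tendsto_add[OF no_reset after_reset] by simp
qed

lemma reset_expect_power_tendsto_zero:
  fixes lam v1 v2 vj t :: real
  assumes "lam \<ge> 0" and "v2 \<le> v1" and "t \<ge> 0" and "k \<ge> 1"
  shows "((\<lambda>xi. reset_expect lam xi v1 v2 vj (\<lambda>x. x ^ k) t) \<longlongrightarrow> 0) at_top"
proof -
  obtain h where "continuous_on {0..t} h"
    and "\<And>s. s \<in> {0..t} \<Longrightarrow> gcp_expect lam v1 v2 vj (\<lambda>x. x ^ k) s = s * h s"
    using gcp_expect_power_factor[OF assms(1,2,4)] by blast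
  from reset_transform_tendsto_zero[OF assms(3) this] show ?thesis
    by (simp add: reset_expect_def)
qed

lemma msd_tendsto:
  fixes lam v1 v2 vj t :: real
  assumes "lam \<ge> 0" and "v2 \<le> v1" and "t \<ge> 0"
  shows "((\<lambda>xi. msd lam xi v1 v2 vj t) \<longlongrightarrow> gcp_expect lam v1 v2 vj (\<lambda>x. x ^ 2) t) at_top"
proof -
  have "((\<lambda>xi. reset_expect lam xi v1 v2 vj (\<lambda>x. x ^ 1) t) \<longlongrightarrow> 0) at_top"
    and "((\<lambda>xi. reset_expect lam xi v1 v2 vj (\<lambda>x. x ^ 2) t) \<longlongrightarrow> 0) at_top"
    using reset_expect_power_tendsto_zero[OF assms, where k = 1]
      reset_expect_power_tendsto_zero[OF assms, where k = 2] by simp_all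
  then have "((\<lambda>xi. msd lam xi v1 v2 vj t)
      \<longlongrightarrow> 0 + gcp_expect lam v1 v2 vj (\<lambda>x. x ^ 2) t - 2 * 0 * gcp_expect lam v1 v2 vj (\<lambda>x. x) t) at_top"
    unfolding msd_def by (intro tendsto_intros) simp_all
  then show ?thesis
    by simp
qed

theorem corollary6:
  fixes lam t :: real and v :: "nat \<Rightarrow> real" and j :: nat
  assumes "lam > 0" and "v 2 < v 1"
    and "(v 2 < 0 \<and> 0 < v 1) \<or> (0 < v 2 \<and> v 2 < v 1)"
    and "t \<ge> 0" and "j \<in> {1, 2}"
  shows "((\<lambda>xi. msd lam xi (v 1) (v 2) (v j) t)
            \<longlongrightarrow> gcp_expect lam (v 1) (v 2) (v j) (\<lambda>x. x ^ 2) t) at_top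
       \<and> gcp_expect lam (v 1) (v 2) (v j) (\<lambda>x. x ^ 2) t
           = t^2 * (3 * (v j)^2 + lam * t * ((v 1)^2 + v 1 * v 2 + (v 2)^2)) / (3 * (1 + lam * t))"
proof
  have "lam \<ge> 0" and "v 2 \<le> v 1"
    using assms(1,2) by simp_all
  then show "((\<lambda>xi. msd lam xi (v 1) (v 2) (v j) t)
      \<longlongrightarrow> gcp_expect lam (v 1) (v 2) (v j) (\<lambda>x. x ^ 2) t) at_top"
    using msd_tendsto assms(4) by blast
  show "gcp_expect lam (v 1) (v 2) (v j) (\<lambda>x. x ^ 2) t
      = t^2 * (3 * (v j)^2 + lam * t * ((v 1)^2 + v 1 * v 2 + (v 2)^2)) / (3 * (1 + lam * t))"
    using gcp_expect_square assms(1,2,4) by simp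
qed

end
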